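(* Let $n$ and $k$ be odd integers with $k\ge3$ and $n>2k+1$. Then $$\chi_c(\mathrm{Pet}(n,k))\ \le\ \frac{2n}{n-k}.$$
   Context: For integers $n,k$ with $2<2k\le n$, the generalized Petersen graph $\mathrm{Pet}(n,k)$ has vertex set $\{u_0,\dots,u_{n-1}\}\cup\{v_0,\dots,v_{n-1}\}$ and edge set $\{u_iu_{i+1}\}\cup\{u_iv_i\}\cup\{v_iv_{i+k}\}$, indices modulo $n$. For integers $p\ge 2q\ge 2$, the circular complete graph $K_{p/q}$ has vertex set $\{0,\dots,p-1\}$ with $i\sim j$ iff $q\le|i-j|\le p-q$; the circular chromatic number $\chi_c(G)$ is the minimum of $p/q$ over all such $p,q$ for which $G$ admits a homomorphism to $K_{p/q}$. *)

theory Defs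
  imports Complex_Main
begin

text \<open>Generalized Petersen graph Pet(n,k). Vertices are pairs (i, b) with i < n;
  (i, False) is the outer vertex u_i, (i, True) the inner vertex v_i.
  Indices are taken modulo n.\<close>

definition pet_vertices :: "nat \<Rightarrow> (nat \<times> bool) set" where
  "pet_vertices n = {0..<n} \<times> UNIV"

definition pet_edge :: "nat \<Rightarrow> nat \<Rightarrow> nat \<times> bool \<Rightarrow> nat \<times> bool \<Rightarrow> bool" where
  "pet_edge n k x y \<longleftrightarrow>
     x \<in> pet_vertices n \<and> y \<in> pet_vertices n \<and>
     ( (\<not> snd x \<and> \<not> snd y \<and> (fst y = (fst x + 1) mod n \<or> fst x = (fst y + 1) mod n))
     \<or> (fst x = fst y \<and> snd x \<noteq> snd y)
     \<or> (snd x \<and> snd y \<and> (fst y = (fst x + k) mod n \<or> fst x = (fst y + k) mod n)))"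

definition circ_edge :: "nat \<Rightarrow> nat \<Rightarrow> nat \<Rightarrow> nat \<Rightarrow> bool" where
  "circ_edge p q i j \<longleftrightarrow> i < p \<and> j < p \<and>
     int q \<le> \<bar>int i - int j\<bar> \<and> \<bar>int i - int j\<bar> \<le> int p - int q"

definition circ_hom :: "'a set \<Rightarrow> ('a \<Rightarrow> 'a \<Rightarrow> bool) \<Rightarrow> nat \<Rightarrow> nat \<Rightarrow> ('a \<Rightarrow> nat) \<Rightarrow> bool" where
  "circ_hom V E p q f \<longleftrightarrow> (\<forall>x\<in>V. f x < p) \<and> (\<forall>x y. E x y \<longrightarrow> circ_edge p q (f x) (f y))"

definition circ_chrom :: "'a set \<Rightarrow> ('a \<Rightarrow> 'a \<Rightarrow> bool) \<Rightarrow> real" where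
  "circ_chrom V E = Inf {real p / real q | p q. 1 \<le> q \<and> 2 * q \<le> p \<and> (\<exists>f. circ_hom V E p q f)}"

end

theory Submission
  imports Defs
begin

text \<open>Colour u_i with i for even i and with i + n for odd i, and v_i the other way round,
  in the circle Z_2n. Moving along an edge of either cycle by an odd step d without wrapping
  around flips the parity, so the colour changes by n \<plusminus> d; at the wrap-around the parity is
  kept (n and d are odd) and the colour changes by n - d. A spoke changes the colour by n.
  With d = 1 on the outer and d = k on the inner cycle, all gaps lie in [n - k, n + k],
  which is exactly adjacency in K_{2n/(n-k)}.\<close>

lemma circ_chrom_le_of_hom:
  assumes "circ_hom V E p q f" and "1 \<le> q" and "2 * q \<le> p"
  shows "circ_chrom V E \<le> real p / real q"
  unfolding circ_chrom_def
proof (rule cInf_lower)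
  show "real p / real q \<in> {real p / real q | p q. 1 \<le> q \<and> 2 * q \<le> p \<and> (\<exists>f. circ_hom V E p q f)}"
    using assms by blast
  show "bdd_below {real p / real q | p q. 1 \<le> q \<and> 2 * q \<le> p \<and> (\<exists>f. circ_hom V E p q f)}"
    by (rule bdd_belowI[where m = 0]) auto
qed

definition pet_colouring :: "nat \<Rightarrow> nat \<times> bool \<Rightarrow> nat" where
  "pet_colouring n x = (if odd (fst x) = snd x then fst x else fst x + n)"

abbreviation colour_gap :: "nat \<Rightarrow> nat \<times> bool \<Rightarrow> nat \<times> bool \<Rightarrow> int" where
  "colour_gap n x y \<equiv> \<bar>int (pet_colouring n x) - int (pet_colouring n y)\<bar>"

lemma colour_gap_cyclic_shift:
  assumes "odd n" and "odd d" and "d < n" and "i < n"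
  shows "int n - int d \<le> colour_gap n (i, b) ((i + d) mod n, b)
    \<and> colour_gap n (i, b) ((i + d) mod n, b) \<le> int n + int d"
proof (cases "i + d < n")
  case True
  have "odd (i + d) \<longleftrightarrow> \<not> odd i"
    using \<open>odd d\<close> by auto
  then show ?thesis
    using True by (auto simp: pet_colouring_def)
next
  case False
  then have wrap: "(i + d) mod n = i + d - n"
    using assms by (simp add: mod_if)
  have "i + d = (i + d - n) + n"
    using False by simp
  then have "odd (i + d - n) \<longleftrightarrow> odd i"
    using \<open>odd n\<close> \<open>odd d\<close> by (metis even_add)
  then show ?thesis
    using False \<open>i < n\<close> by (auto simp: wrap pet_colouring_def)
qed

lemma colour_gap_spoke:
  assumes "b \<noteq> c"
  shows "colour_gap n (i, b) (i, c) = int n"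
  using assms by (auto simp: pet_colouring_def)

lemma circ_hom_pet_colouring:
  assumes "odd n" and "odd k" and "k < n"
  shows "circ_hom (pet_vertices n) (pet_edge n k) (2 * n) (n - k) (pet_colouring n)"
  unfolding circ_hom_def
proof (intro conjI ballI allI impI)
  fix x
  assume "x \<in> pet_vertices n"
  then show "pet_colouring n x < 2 * n"
    by (auto simp: pet_vertices_def pet_colouring_def)
next
  fix x y
  assume edge: "pet_edge n k x y"
  obtain i b j c where xy: "x = (i, b)" "y = (j, c)"
    by fastforce
  have ij: "i < n" "j < n"
    using edge xy by (auto simp: pet_edge_def pet_vertices_def)
  have "1 \<le> k"
    using \<open>odd k\<close> by (cases k) auto
  have shift: "int n - int k \<le> colour_gap n (i', b') ((i' + d) mod n, b')
      \<and> colour_gap n (i', b') ((i' + d) mod n, b') \<le> int n + int k"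
    if "i' < n" "odd d" "1 \<le> d" "d \<le> k" for i' b' d
    using colour_gap_cyclic_shift[OF \<open>odd n\<close> \<open>odd d\<close> _ \<open>i' < n\<close>, of b'] that \<open>k < n\<close>
    by auto
  have outer: "int n - int k \<le> colour_gap n (i', b') ((i' + 1) mod n, b')
      \<and> colour_gap n (i', b') ((i' + 1) mod n, b') \<le> int n + int k" if "i' < n" for i' b'
    using shift[OF that, of 1] \<open>1 \<le> k\<close> by simp
  have inner: "int n - int k \<le> colour_gap n (i', b') ((i' + k) mod n, b')
      \<and> colour_gap n (i', b') ((i' + k) mod n, b') \<le> int n + int k" if "i' < n" for i' b'
    using shift[OF that \<open>odd k\<close> \<open>1 \<le> k\<close>] by simp
  have "int n - int k \<le> colour_gap n (i, b) (j, c) \<and> colour_gap n (i, b) (j, c) \<le> int n + int k"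
    using edge unfolding pet_edge_def xy fst_conv snd_conv
  proof (elim conjE disjE)
    assume "\<not> b" "\<not> c" "j = (i + 1) mod n"
    then show ?thesis
      using outer[OF ij(1), of b] by simp
  next
    assume "\<not> b" "\<not> c" "i = (j + 1) mod n"
    then show ?thesis
      using outer[OF ij(2), of c] by (simp add: abs_minus_commute)
  next
    assume "i = j" "b \<noteq> c"
    then show ?thesis
      using colour_gap_spoke[of b c n i] \<open>k < n\<close> by simp
  next
    assume "b" "c" "j = (i + k) mod n"
    then show ?thesis
      using inner[OF ij(1), of b] by simp
  next
    assume "b" "c" "i = (j + k) mod n"
    then show ?thesis
      using inner[OF ij(2), of c] by (simp add: abs_minus_commute)
  qed
  moreover have "pet_colouring n x < 2 * n" "pet_colouring n y < 2 * n"
    using ij xy by (auto simp: pet_colouring_def)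
  ultimately show "circ_edge (2 * n) (n - k) (pet_colouring n x) (pet_colouring n y)"
    using \<open>k < n\<close> xy by (simp add: circ_edge_def of_nat_diff)
qed

theorem corollary6:
  fixes n k :: nat
  assumes "odd n" and "odd k" and "k \<ge> 3" and "n > 2 * k + 1"
  shows "circ_chrom (pet_vertices n) (pet_edge n k) \<le> 2 * real n / (real n - real k)"
proof -
  have "k < n"
    using assms(4) by simp
  then have "circ_chrom (pet_vertices n) (pet_edge n k) \<le> real (2 * n) / real (n - k)"
    using circ_chrom_le_of_hom[OF circ_hom_pet_colouring[OF assms(1,2)]] by simp
  also have "\<dots> = 2 * real n / (real n - real k)"
    using \<open>k < n\<close> by (simp add: of_nat_diff)
  finally show ?thesis .
qed

end
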